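(* Let $(\mathcal{X},\rho)$ be a length space and $c:\mathcal{X}\to\mathcal{Y}$ a classifier. Then for every $x\in\mathcal{X}$, $$m_c(x)=\rho(x,\partial\mathcal{X}).$$
   Context: A metric space $(\mathcal{X},\rho)$ is a length space if for all $x,x'$, $\rho(x,x')=\inf_\gamma \ell(\gamma)$, the infimum over continuous paths $\gamma:[0,1]\to\mathcal{X}$ from $x$ to $x'$ and $\ell(\gamma)$ the length of $\gamma$. Margin $m_c(x)=\inf_{x':c(x')\neq c(x)}\rho(x,x')$; $\partial\mathcal{X}=\{x:m_c(x)=0\}$; $\rho(x,A)=\inf_{a\in A}\rho(x,a)$; infima over empty sets are $+\infty$. *)

theory Defs
  imports "HOL-Analysis.Analysis"
begin

definition path_len :: "(real \<Rightarrow> 'a::metric_space) \<Rightarrow> ereal" where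
  "path_len \<gamma> = (SUP (n, t) \<in> {(n, t). t 0 = 0 \<and> t n = 1 \<and> (\<forall>i<n. t i \<le> t (Suc i))}.
      ereal (\<Sum>i<n. dist (\<gamma> (t i)) (\<gamma> (t (Suc i)))))"

definition length_space :: "'a::metric_space itself \<Rightarrow> bool" where
  "length_space _ \<longleftrightarrow> (\<forall>x x' :: 'a. ereal (dist x x') =
     (INF \<gamma> \<in> {\<gamma>. continuous_on {0..1} \<gamma> \<and> \<gamma> 0 = x \<and> \<gamma> 1 = x'}. path_len \<gamma>))"

text \<open>Margin of a classifier at x (infimum over empty set is +infinity).\<close>
definition margin :: "('a::metric_space \<Rightarrow> 'b) \<Rightarrow> 'a \<Rightarrow> ereal" where
  "margin c x = (INF x' \<in> {x'. c x' \<noteq> c x}. ereal (dist x x'))"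

definition decision_boundary :: "('a::metric_space \<Rightarrow> 'b) \<Rightarrow> 'a set" where
  "decision_boundary c = {x. margin c x = 0}"

definition setdist_e :: "'a::metric_space \<Rightarrow> 'a set \<Rightarrow> ereal" where
  "setdist_e x A = (INF a \<in> A. ereal (dist x a))"

end

theory Submission
  imports Defs
begin

text \<open>Off the decision boundary the classifier is locally constant, so it is constant on every
  connected set avoiding the boundary. A near-shortest path from \<open>x\<close> to a point \<open>x'\<close> of another
  class is connected and changes class, hence meets the boundary at a point no farther from \<open>x\<close>
  than the length of the path; this bounds \<open>\<rho>(x, \<partial>\<X>)\<close> by the margin. Conversely a boundary
  point \<open>z\<close> has points of another class arbitrarily close to it, which bounds the margin by
  \<open>\<rho>(x, z)\<close>.\<close>

lemma margin_zero_iff: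
  "margin c z = 0 \<longleftrightarrow> (\<forall>e>0. \<exists>x'. c x' \<noteq> c z \<and> dist z x' < e)"
proof
  assume zero: "margin c z = 0"
  show "\<forall>e>0. \<exists>x'. c x' \<noteq> c z \<and> dist z x' < e"
  proof (intro allI impI)
    fix e :: real assume "e > 0"
    then have "margin c z < ereal e" using zero by simp
    then show "\<exists>x'. c x' \<noteq> c z \<and> dist z x' < e"
      unfolding margin_def INF_less_iff by auto
  qed
next
  assume close: "\<forall>e>0. \<exists>x'. c x' \<noteq> c z \<and> dist z x' < e"
  have "0 \<le> margin c z"
    unfolding margin_def by (rule INF_greatest) simp
  moreover have "margin c z \<le> 0"
  proof (rule ereal_le_epsilon2)
    fix e :: real assume "0 < e"
    then obtain x' where "c x' \<noteq> c z" "dist z x' < e" using close by blast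
    then have "margin c z \<le> ereal (dist z x')"
      unfolding margin_def by (intro INF_lower) auto
    also have "\<dots> \<le> 0 + ereal e" using \<open>dist z x' < e\<close> by simp
    finally show "margin c z \<le> 0 + ereal e" .
  qed
  ultimately show "margin c z = 0" by simp
qed

lemma classifier_locally_constant_off_boundary:
  assumes "y \<notin> decision_boundary c"
  obtains e where "e > 0" "\<And>y'. y' \<in> ball y e \<Longrightarrow> c y' = c y"
proof -
  have "\<exists>e>0. \<forall>y'. dist y y' < e \<longrightarrow> c y' = c y"
    using assms unfolding decision_boundary_def margin_zero_iff by blast
  then show thesis using that by (auto simp: mem_ball)
qed

lemma classifier_constant_on_connected:
  assumes "connected S" "S \<inter> decision_boundary c = {}"
  shows "c constant_on S"
proof (rule locally_constant_imp_constant[OF \<open>connected S\<close>])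
  fix a assume "a \<in> S"
  then have "a \<notin> decision_boundary c"
    using assms(2) by blast
  then obtain e where "e > 0" and same_class: "\<And>y. y \<in> ball a e \<Longrightarrow> c y = c a"
    using classifier_locally_constant_off_boundary by blast
  have "openin (top_of_set S) (S \<inter> ball a e)"
    by (simp add: openin_open_Int)
  moreover have "a \<in> S \<inter> ball a e"
    using \<open>a \<in> S\<close> \<open>e > 0\<close> by simp
  moreover have "\<forall>y\<in>S \<inter> ball a e. c y = c a"
    using same_class by blast
  ultimately show "\<exists>T. openin (top_of_set S) T \<and> a \<in> T \<and> (\<forall>y\<in>T. c y = c a)"
    by blast
qed

lemma path_meets_decision_boundary:
  fixes \<gamma> :: "real \<Rightarrow> 'a::metric_space"
  assumes "continuous_on {0..1} \<gamma>" "c (\<gamma> 1) \<noteq> c (\<gamma> 0)"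
  obtains t where "t \<in> {0..1}" "\<gamma> t \<in> decision_boundary c"
proof -
  have "\<gamma> 0 \<in> \<gamma> ` {0..1}" "\<gamma> 1 \<in> \<gamma> ` {0..1}"
    by auto
  then have "\<not> c constant_on \<gamma> ` {0..1}"
    using assms(2) unfolding constant_on_def by metis
  moreover have "connected (\<gamma> ` {0..1})"
    using assms(1) by (rule connected_continuous_image) simp
  ultimately have "\<gamma> ` {0..1} \<inter> decision_boundary c \<noteq> {}"
    using classifier_constant_on_connected by blast
  then show thesis using that by blast
qed

lemma dist_le_path_len:
  assumes "0 \<le> t" "t \<le> 1"
  shows "ereal (dist (\<gamma> 0) (\<gamma> t)) \<le> path_len \<gamma>"
proof -
  define p :: "nat \<Rightarrow> real" where "p = (\<lambda>i. if i = 0 then 0 else if i = 1 then t else 1)"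
  have partition: "(2, p) \<in> {(n, t). t 0 = 0 \<and> t n = 1 \<and> (\<forall>i<n. t i \<le> t (Suc i))}"
    using assms by (auto simp: p_def less_Suc_eq)
  have "ereal (dist (\<gamma> 0) (\<gamma> t)) \<le> ereal (\<Sum>i<2. dist (\<gamma> (p i)) (\<gamma> (p (Suc i))))"
    by (simp add: p_def numeral_2_eq_2)
  also have "\<dots> \<le> path_len \<gamma>"
    unfolding path_len_def using partition by (rule SUP_upper2) simp
  finally show ?thesis .
qed

lemma margin_le_dist_decision_boundary:
  assumes "z \<in> decision_boundary c"
  shows "margin c x \<le> ereal (dist x z)"
proof (cases "c z = c x")
  case False
  then show ?thesis unfolding margin_def by (intro INF_lower) auto
next
  case True
  show ?thesis
  proof (rule ereal_le_epsilon2)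
    fix e :: real assume "0 < e"
    then obtain x' where x': "c x' \<noteq> c z" "dist z x' < e"
      using assms by (auto simp: decision_boundary_def margin_zero_iff)
    then have "margin c x \<le> ereal (dist x x')"
      unfolding margin_def using True by (intro INF_lower) auto
    also have "\<dots> \<le> ereal (dist x z) + ereal e"
      using dist_triangle[of x x' z] x'(2) by (simp add: dist_commute)
    finally show "margin c x \<le> ereal (dist x z) + ereal e" .
  qed
qed

lemma margin_le_setdist_decision_boundary:
  "margin c x \<le> setdist_e x (decision_boundary c)"
  unfolding setdist_e_def by (rule INF_greatest) (rule margin_le_dist_decision_boundary)

lemma setdist_decision_boundary_le_margin:
  fixes c :: "'a::metric_space \<Rightarrow> 'b"
  assumes "length_space TYPE('a)"
  shows "setdist_e x (decision_boundary c) \<le> margin c x"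
  unfolding margin_def
proof (rule INF_greatest)
  fix x' assume "x' \<in> {x'. c x' \<noteq> c x}"
  then have class_change: "c x' \<noteq> c x" by simp
  show "setdist_e x (decision_boundary c) \<le> ereal (dist x x')"
  proof (rule ereal_le_epsilon2)
    fix e :: real assume "0 < e"
    have "(INF \<gamma> \<in> {\<gamma>. continuous_on {0..1} \<gamma> \<and> \<gamma> 0 = x \<and> \<gamma> 1 = x'}. path_len \<gamma>)
          = ereal (dist x x')"
      using assms unfolding length_space_def by simp
    then have "(INF \<gamma> \<in> {\<gamma>. continuous_on {0..1} \<gamma> \<and> \<gamma> 0 = x \<and> \<gamma> 1 = x'}. path_len \<gamma>)
          < ereal (dist x x' + e)"
      using \<open>0 < e\<close> by simp
    then obtain \<gamma> where \<gamma>: "continuous_on {0..1} \<gamma>" "\<gamma> 0 = x" "\<gamma> 1 = x'"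
      and short: "path_len \<gamma> < ereal (dist x x' + e)"
      unfolding INF_less_iff by blast
    have "c (\<gamma> 1) \<noteq> c (\<gamma> 0)"
      using \<gamma>(2,3) class_change by simp
    then obtain t where t: "t \<in> {0..1}" "\<gamma> t \<in> decision_boundary c"
      by (rule path_meets_decision_boundary[OF \<gamma>(1)])
    have "setdist_e x (decision_boundary c) \<le> ereal (dist x (\<gamma> t))"
      unfolding setdist_e_def using t(2) by (rule INF_lower)
    also have "\<dots> \<le> path_len \<gamma>" using dist_le_path_len[of t \<gamma>] t(1) \<gamma>(2) by simp
    also have "\<dots> \<le> ereal (dist x x') + ereal e" using short by simp
    finally show "setdist_e x (decision_boundary c) \<le> ereal (dist x x') + ereal e" .
  qed
qed

theorem lemma8:
  fixes c :: "'a::metric_space \<Rightarrow> 'b" and x :: 'a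
  assumes "length_space TYPE('a)"
  shows "margin c x = setdist_e x (decision_boundary c)"
  using margin_le_setdist_decision_boundary setdist_decision_boundary_le_margin[OF assms]
  by (rule antisym)

end
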